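(* Let $\xi,\eta>0$, $p>2$, and $\lambda>1$ with $\lambda^2\left(1-\frac{1}{\lambda^2}\right)^{p/2}\ge 1$, and let $t\in[0,1]$. For $(x_1,y_1)\in[0,1/\lambda]\times[0,1/\lambda]$ define $$F(x_1,y_1)=\lambda^p(\xi x_1+\eta t y_1)^p+\left(\xi^2+\eta^2t^2-2\eta\xi t x_1y_1+2\eta\xi t\sqrt{1-x_1^2}\sqrt{1-y_1^2}\right)^{p/2}.$$ Then $$\max\left\{F(x_1,y_1):0\le x_1,y_1\le\tfrac{1}{\lambda}\right\}\le\max\Big\{\left(1+\lambda^{-2p/(p-2)}\right)(\xi+\eta t)^p;\ (\xi+\eta t)^p+\left(\xi^2+\eta^2t^2-\tfrac{4\eta\xi t}{\lambda^2}+2\eta\xi t\right)^{p/2};\ (\xi+\eta)^p+(\xi+\eta t)^{p-2}\cdot\tfrac{2[\xi-(2\eta\xi-\eta)t]}{\lambda^2}\Big\}.$$ *)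

theory Defs
  imports "HOL-Analysis.Analysis"
begin

definition Ffun :: "real \<Rightarrow> real \<Rightarrow> real \<Rightarrow> real \<Rightarrow> real \<Rightarrow> real \<Rightarrow> real \<Rightarrow> real" where
  "Ffun \<xi> \<eta> p lam t x1 y1 =
     lam powr p * (\<xi> * x1 + \<eta> * t * y1) powr p
     + (\<xi>^2 + \<eta>^2 * t^2 - 2 * \<eta> * \<xi> * t * x1 * y1
        + 2 * \<eta> * \<xi> * t * sqrt (1 - x1^2) * sqrt (1 - y1^2)) powr (p / 2)"

end

theory Submission
  imports Defs
begin

text \<open>Write \<open>x\<^sub>1 = sin \<alpha>\<close>, \<open>y\<^sub>1 = sin \<beta>\<close>, \<open>A = \<xi>\<close>, \<open>B = \<eta> t\<close> and \<open>c = 1/\<lambda>\<close>; the hypothesis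
  on \<open>\<lambda>\<close> forces \<open>\<lambda>\<^sup>2 \<ge> 2\<close>, i.e. \<open>c \<le> sin (pi/4)\<close>. Then \<open>F = u\<^sup>p + v\<^sup>p\<close> with
  \<open>u = \<lambda> (A x\<^sub>1 + B y\<^sub>1)\<close> and \<open>v\<^sup>2 = A\<^sup>2 + B\<^sup>2 + 2 A B cos (\<alpha> + \<beta>)\<close>. Both \<open>u\<close> and \<open>v\<close> are at
  most \<open>A + B\<close>, and a linear upper bound for \<open>cos (\<alpha> + \<beta>)\<close> in \<open>x\<^sub>1, y\<^sub>1 \<in> [0, c]\<close> shows that
  \<open>u + v\<close> is maximal at the corner \<open>x\<^sub>1 = y\<^sub>1 = c\<close>, where it equals \<open>A + B + N\<close> with
  \<open>N\<^sup>2 = A\<^sup>2 + B\<^sup>2 + 2 A B (1 - 2 c\<^sup>2)\<close>. Since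
  \<open>s \<mapsto> s\<^sup>p\<close> is convex and increasing, \<open>u\<^sup>p + v\<^sup>p \<le> (A + B)\<^sup>p + N\<^sup>p\<close>, which is the second entry
  of the maximum.\<close>

lemma convex_on_powr_atLeast0:
  assumes "1 \<le> p"
  shows "convex_on {0::real..} (\<lambda>x. x powr p)"
proof (rule convex_on_linorderI)
  fix t x y :: real
  assume t: "0 < t" "t < 1" and xy: "x \<in> {0..}" "y \<in> {0..}" "x < y"
  show "((1 - t) *\<^sub>R x + t *\<^sub>R y) powr p \<le> (1 - t) * x powr p + t * y powr p"
  proof (cases "x = 0")
    case True
    have "t powr p \<le> t"
      using t assms by (intro powr_le_one_le) auto
    then have "t powr p * y powr p \<le> t * y powr p"
      by (intro mult_right_mono) auto
    with True xy show ?thesis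
      by (simp add: powr_mult)
  next
    case False
    with xy show ?thesis
      using convex_onD[OF powr_convex[OF assms], of t x y] t by simp
  qed
qed (rule convex_real_interval)

lemma convex_on_Icc_add_le:
  fixes f :: "real \<Rightarrow> real"
  assumes "convex_on {a..b} f" "u \<in> {a..b}" "v \<in> {a..b}" "u + v = a + b"
  shows "f u + f v \<le> f a + f b"
proof (cases "a < b")
  case True
  define s where "s = (f b - f a) / (b - a)"
  have "f u \<le> s * (u - a) + f a" "f v \<le> s * (v - a) + f a"
    using convex_onD_Icc'[OF assms(1)] assms(2,3) by (auto simp: s_def)
  moreover have "s * (u - a) + s * (v - a) = s * (b - a)"
    using assms(4) by (simp flip: distrib_left)
  moreover have "s * (b - a) = f b - f a"
    using True by (simp add: s_def)
  ultimately show ?thesis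
    by linarith
next
  case False
  with assms have "u = a" "v = a" "b = a"
    by auto
  then show ?thesis
    by simp
qed

lemma convex_mono_add_le_of_majorized:
  fixes f :: "real \<Rightarrow> real"
  assumes "convex_on {a..} f" "mono_on {a..} f"
    and "a \<le> u" "a \<le> v" "a \<le> N" "u \<le> M" "v \<le> M" "u + v \<le> M + N"
  shows "f u + f v \<le> f M + f N"
proof -
  define w where "w = max a (u + v - M)"
  define b where "b = u + v - w"
  have uv: "u \<in> {w..b}" "v \<in> {w..b}"
    using assms by (auto simp: w_def b_def)
  have "convex_on {w..b} f"
    using assms(1) by (rule convex_on_subset) (auto simp: w_def)
  then have "f u + f v \<le> f w + f b"
    using uv by (rule convex_on_Icc_add_le) (simp add: b_def)
  also have "\<dots> \<le> f N + f M"
    using assms uv by (intro add_mono mono_onD[OF assms(2)]) (auto simp: w_def b_def)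
  finally show ?thesis
    by simp
qed

lemma powr_add_powr_le_of_majorized:
  fixes u v M N p :: real
  assumes "1 \<le> p" "0 \<le> u" "0 \<le> v" "0 \<le> N" "u \<le> M" "v \<le> M" "u + v \<le> M + N"
  shows "u powr p + v powr p \<le> M powr p + N powr p"
proof (rule convex_mono_add_le_of_majorized[where a = 0 and f = "\<lambda>x. x powr p"])
  show "mono_on {0..} (\<lambda>x. x powr p)"
    using assms(1) by (intro mono_onI powr_mono2) auto
  show "convex_on {0..} (\<lambda>x. x powr p)"
    using assms(1) by (rule convex_on_powr_atLeast0)
qed (use assms in auto)

definition cos_add_of_sin :: "real \<Rightarrow> real \<Rightarrow> real" where
  "cos_add_of_sin x y = sqrt (1 - x^2) * sqrt (1 - y^2) - x * y"

lemma cos_add_of_sin_eq_cos: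
  assumes "\<bar>x\<bar> \<le> 1" "\<bar>y\<bar> \<le> 1"
  shows "cos_add_of_sin x y = cos (arcsin x + arcsin y)"
  using assms by (simp add: cos_add_of_sin_def cos_add cos_arcsin abs_le_iff)

lemma cos_add_of_sin_self:
  assumes "\<bar>c\<bar> \<le> 1"
  shows "cos_add_of_sin c c = 1 - 2 * c^2"
proof -
  have "c^2 \<le> 1"
    using assms by (simp add: abs_square_le_1)
  then show ?thesis
    by (simp add: cos_add_of_sin_def power2_eq_square[symmetric])
qed

lemma sqrt_one_minus_sq_mult_le:
  assumes "\<bar>c\<bar> \<le> 1" "\<bar>x\<bar> \<le> 1"
  shows "sqrt (1 - c^2) * sqrt (1 - x^2) \<le> 1 - c * x"
proof -
  have "cos_add_of_sin c (- x) \<le> 1"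
    using assms by (simp add: cos_add_of_sin_eq_cos)
  then show ?thesis
    by (simp add: cos_add_of_sin_def)
qed

text \<open>With \<open>y = sin \<beta>\<close> and \<open>c = sin \<gamma>\<close> this says \<open>sin (\<gamma> + \<beta>) \<le> sin (2 * \<gamma>)\<close>
  for \<open>\<beta> \<le> \<gamma> \<le> pi / 4\<close>.\<close>

lemma mult_sqrt_one_minus_sq_le:
  assumes "0 \<le> y" "y \<le> c" "c^2 \<le> 1/2"
  shows "c * sqrt (1 - y^2) \<le> sqrt (1 - c^2) * (2 * c - y)"
proof -
  have c: "0 \<le> c"
    using assms by linarith
  have "c^2 * (1 - y^2) \<le> (1 - c^2) * (2 * c - y)^2"
  proof -
    have "(1 - c^2) * (2 * c - y)^2 - c^2 * (1 - y^2) = (c - y) * (2 * c * (1 - 2 * c^2) + (c - y))"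
      by (simp add: power2_eq_square algebra_simps)
    moreover have "0 \<le> (c - y) * (2 * c * (1 - 2 * c^2) + (c - y))"
      using assms c by (intro mult_nonneg_nonneg add_nonneg_nonneg) auto
    ultimately show ?thesis
      by linarith
  qed
  then have "sqrt (c^2 * (1 - y^2)) \<le> sqrt ((1 - c^2) * (2 * c - y)^2)"
    by (rule real_sqrt_le_mono)
  then show ?thesis
    using assms c by (simp add: real_sqrt_mult)
qed

lemma cos_add_of_sin_le_linear:
  assumes "0 \<le> x" "x \<le> c" "0 \<le> y" "y \<le> c" "c^2 \<le> 1/2"
  shows "cos_add_of_sin x y \<le> cos_add_of_sin c c + 2 * c * (c - x) + 2 * c * (c - y)"
proof -
  define s where "s = sqrt (1 - x^2)"
  define r where "r = sqrt (1 - y^2)"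
  define k where "k = sqrt (1 - c^2)"
  have c: "0 \<le> c" "c \<le> 1"
    using assms power2_le_imp_le[of c 1] by auto
  have k: "0 < k" "k^2 = 1 - c^2"
    using assms unfolding k_def by auto
  have r: "0 \<le> r"
    using assms c unfolding r_def by (simp add: power_le_one)
  have ks: "k * s \<le> 1 - c * x" and kr: "k * r \<le> 1 - c * y"
    using assms c unfolding k_def s_def r_def by (auto intro!: sqrt_one_minus_sq_mult_le)
  have cr: "c * r \<le> k * (2 * c - y)"
    using assms(3-5) unfolding k_def r_def by (rule mult_sqrt_one_minus_sq_le)
  have "k * (s * r) \<le> r * (1 - c * x)"
    using mult_right_mono[OF ks r] by (simp add: algebra_simps)
  also have "\<dots> = r * k^2 + (c * r) * (c - x)"
    unfolding k(2) by (simp add: algebra_simps power2_eq_square)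
  also have "\<dots> \<le> k * (k * r) + k * (2 * c - y) * (c - x)"
    using mult_right_mono[OF cr, of "c - x"] assms by (simp add: power2_eq_square algebra_simps)
  also have "\<dots> \<le> k * ((1 - c * y) + (2 * c - y) * (c - x))"
    using mult_left_mono[OF kr, of k] k by (simp add: algebra_simps)
  finally have "s * r \<le> (1 - c * y) + (2 * c - y) * (c - x)"
    using k by simp
  then show ?thesis
    using c by (simp add: cos_add_of_sin_self cos_add_of_sin_def s_def r_def algebra_simps power2_eq_square)
qed

text \<open>With \<open>A = \<xi>\<close> and \<open>B = \<eta> * t\<close> this is the radicand of the second summand of
  \<open>Ffun\<close>: by the law of cosines, the squared third side of a triangle whose sides \<open>A\<close>
  and \<open>B\<close> enclose the angle \<open>pi - (\<alpha> + \<beta>)\<close>, where \<open>x = sin \<alpha>\<close> and \<open>y = sin \<beta>\<close>.\<close>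

definition third_side_sq :: "real \<Rightarrow> real \<Rightarrow> real \<Rightarrow> real \<Rightarrow> real" where
  "third_side_sq A B x y = A^2 + B^2 + 2 * A * B * cos_add_of_sin x y"

lemma third_side_sq_bounds:
  assumes "0 \<le> A" "0 \<le> B" "\<bar>x\<bar> \<le> 1" "\<bar>y\<bar> \<le> 1"
  shows "0 \<le> third_side_sq A B x y" "third_side_sq A B x y \<le> (A + B)^2"
proof -
  have "0 \<le> A * B"
    using assms by simp
  moreover have "-1 \<le> cos_add_of_sin x y" "cos_add_of_sin x y \<le> 1"
    using assms by (simp_all add: cos_add_of_sin_eq_cos)
  ultimately have "- (A * B) \<le> A * B * cos_add_of_sin x y" "A * B * cos_add_of_sin x y \<le> A * B"
    using mult_left_mono by fastforce+
  moreover have "0 \<le> (A - B)^2"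
    by simp
  ultimately show "0 \<le> third_side_sq A B x y" "third_side_sq A B x y \<le> (A + B)^2"
    by (simp_all add: third_side_sq_def power2_eq_square algebra_simps)
qed

lemma add_sqrt_third_side_sq_le_corner:
  assumes "0 \<le> A" "0 \<le> B" "0 < lam" "2 \<le> lam^2" "x \<in> {0..1/lam}" "y \<in> {0..1/lam}"
  shows "lam * (A * x + B * y) + sqrt (third_side_sq A B x y)
    \<le> A + B + sqrt (third_side_sq A B (1/lam) (1/lam))"
proof -
  define c where "c = 1 / lam"
  have c: "0 < c" "c^2 \<le> 1/2" "c \<le> 1" "lam * c = 1" "2 * c \<le> lam"
    using assms power2_le_imp_le[of c 1]
    by (auto simp: c_def field_simps power2_eq_square)
  have xy: "0 \<le> x" "x \<le> c" "0 \<le> y" "y \<le> c"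
    using assms by (auto simp: c_def)
  define m where "m = sqrt (third_side_sq A B c c)"
  define d where "d = lam * (A * (c - x) + B * (c - y))"
  have Qc: "third_side_sq A B c c = A^2 + B^2 + 2 * A * B * (1 - 2 * c^2)"
    using c by (simp add: third_side_sq_def cos_add_of_sin_self)
  have AB: "0 \<le> 2 * A * B * (1 - 2 * c^2)"
    using assms c by simp
  have m: "A \<le> m" "B \<le> m" "m^2 = third_side_sq A B c c"
    using assms AB unfolding m_def Qc by (auto intro!: real_le_rsqrt)
  have d: "0 \<le> d"
    using assms c xy by (simp add: d_def)
  have "2 * c * B \<le> lam * m" "2 * c * A \<le> lam * m"
    using assms c m by (auto intro!: mult_mono)
  moreover have "0 \<le> 2 * (A * (c - x))" "0 \<le> 2 * (B * (c - y))"
    using assms xy by simp_all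
  ultimately have "2 * (A * (c - x)) * (2 * c * B) + 2 * (B * (c - y)) * (2 * c * A)
      \<le> 2 * (A * (c - x)) * (lam * m) + 2 * (B * (c - y)) * (lam * m)"
    by (intro add_mono mult_left_mono)
  \<comment> \<open>as \<open>A, B \<le> m\<close> and \<open>2 c \<le> lam\<close>, the linear decrease of the cosine is paid for by \<open>2 m d\<close>\<close>
  then have cross: "2 * A * B * (2 * c * (c - x) + 2 * c * (c - y)) \<le> 2 * m * d"
    by (simp add: d_def algebra_simps)
  have "third_side_sq A B x y - m^2 = 2 * A * B * (cos_add_of_sin x y - cos_add_of_sin c c)"
    using m(3) by (simp add: third_side_sq_def algebra_simps)
  also have "\<dots> \<le> 2 * A * B * (2 * c * (c - x) + 2 * c * (c - y))"
    using cos_add_of_sin_le_linear[OF xy c(2)] assms by (intro mult_left_mono) auto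
  finally have "third_side_sq A B x y \<le> (m + d)^2"
    using cross zero_le_power2[of d] unfolding power2_sum by linarith
  then have "sqrt (third_side_sq A B x y) \<le> m + d"
    using d m assms by (intro real_le_lsqrt) auto
  moreover have "lam * (A * x + B * y) + d = A + B"
    using c by (simp add: d_def algebra_simps)
  ultimately show ?thesis
    unfolding m_def c_def by linarith
qed

lemma sqrt_powr_eq_powr_half:
  fixes x p :: real
  assumes "0 \<le> x"
  shows "sqrt x powr p = x powr (p / 2)"
  using assms by (simp add: powr_half_sqrt[symmetric] powr_powr)

lemma two_le_sq_if_one_le_sq_mult_powr:
  fixes lam p :: real
  assumes "1 < lam" "2 \<le> p" "1 \<le> lam^2 * (1 - 1 / lam^2) powr (p / 2)"
  shows "2 \<le> lam^2"
proof -
  define q where "q = 1 - 1 / lam^2"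
  have "1 < lam^2"
    using assms(1) by simp
  then have q: "0 < q" "q \<le> 1"
    by (auto simp: q_def divide_less_eq)
  have "1 \<le> lam^2 * q powr (p / 2)"
    using assms(3) by (simp add: q_def)
  also have "\<dots> \<le> lam^2 * q"
    using powr_le_one_le[OF q] assms(2) by (intro mult_left_mono) auto
  also have "\<dots> = lam^2 - 1"
    using assms(1) by (simp add: q_def field_simps)
  finally show ?thesis
    by simp
qed

lemma Ffun_eq_powr_add_powr:
  assumes "0 \<le> \<xi>" "0 \<le> \<eta>" "0 \<le> t" "0 \<le> lam" "x \<in> {0..1}" "y \<in> {0..1}"
  shows "Ffun \<xi> \<eta> p lam t x y
    = (lam * (\<xi> * x + \<eta> * t * y)) powr p + sqrt (third_side_sq \<xi> (\<eta> * t) x y) powr p"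
proof -
  have "0 \<le> third_side_sq \<xi> (\<eta> * t) x y"
    using assms by (intro third_side_sq_bounds) auto
  moreover have "\<xi>^2 + \<eta>^2 * t^2 - 2 * \<eta> * \<xi> * t * x * y
      + 2 * \<eta> * \<xi> * t * sqrt (1 - x^2) * sqrt (1 - y^2) = third_side_sq \<xi> (\<eta> * t) x y"
    by (simp add: third_side_sq_def cos_add_of_sin_def algebra_simps)
  moreover have "lam powr p * (\<xi> * x + \<eta> * t * y) powr p = (lam * (\<xi> * x + \<eta> * t * y)) powr p"
    using assms by (simp add: powr_mult)
  ultimately show ?thesis
    by (simp add: Ffun_def sqrt_powr_eq_powr_half)
qed

lemma Ffun_le_corner:
  assumes "0 \<le> \<xi>" "0 \<le> \<eta>" "0 \<le> t" "1 \<le> p" "0 < lam" "2 \<le> lam^2"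
    and "x \<in> {0..1/lam}" "y \<in> {0..1/lam}"
  shows "Ffun \<xi> \<eta> p lam t x y
    \<le> (\<xi> + \<eta> * t) powr p + sqrt (third_side_sq \<xi> (\<eta> * t) (1/lam) (1/lam)) powr p"
proof -
  define A B where "A = \<xi>" and "B = \<eta> * t"
  have AB: "0 \<le> A" "0 \<le> B"
    using assms by (simp_all add: A_def B_def)
  have "1 \<le> lam"
    using assms(5,6) power2_le_imp_le[of 1 lam] by simp
  then have "1 / lam \<le> 1"
    by simp
  then have xy: "x \<in> {0..1}" "y \<in> {0..1}"
    using assms(7,8) by auto
  have "lam * x \<le> 1" "lam * y \<le> 1"
    using assms by (auto simp: field_simps)
  then have "A * (lam * x) + B * (lam * y) \<le> A + B"
    using AB by (intro add_mono mult_left_le)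
  then have "lam * (A * x + B * y) \<le> A + B"
    by (simp add: algebra_simps)
  moreover have "sqrt (third_side_sq A B x y) \<le> A + B"
    using third_side_sq_bounds(2)[of A B x y] AB xy by (auto intro: real_le_lsqrt)
  moreover have "0 \<le> third_side_sq A B x y" "0 \<le> third_side_sq A B (1/lam) (1/lam)"
    using AB xy assms(5) \<open>1 / lam \<le> 1\<close> by (auto intro: third_side_sq_bounds)
  ultimately have "(lam * (A * x + B * y)) powr p + sqrt (third_side_sq A B x y) powr p
      \<le> (A + B) powr p + sqrt (third_side_sq A B (1/lam) (1/lam)) powr p"
    using add_sqrt_third_side_sq_le_corner[OF AB assms(5-8)] AB assms(4,5) xy
    by (intro powr_add_powr_le_of_majorized) auto
  then show ?thesis
    using Ffun_eq_powr_add_powr[OF assms(1-3) _ xy] assms(5) by (simp add: A_def B_def)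
qed

theorem lemma2:
  fixes \<xi> \<eta> p lam t :: real
  assumes "\<xi> > 0" and "\<eta> > 0" and "p > 2" and "lam > 1"
    and "lam^2 * (1 - 1 / lam^2) powr (p / 2) \<ge> 1"
    and "0 \<le> t" and "t \<le> 1"
  shows "(SUP z \<in> {0..1/lam} \<times> {0..1/lam}. Ffun \<xi> \<eta> p lam t (fst z) (snd z))
    \<le> max ((1 + lam powr (- 2 * p / (p - 2))) * (\<xi> + \<eta> * t) powr p)
        (max ((\<xi> + \<eta> * t) powr p
               + (\<xi>^2 + \<eta>^2 * t^2 - 4 * \<eta> * \<xi> * t / lam^2 + 2 * \<eta> * \<xi> * t) powr (p / 2))
             ((\<xi> + \<eta>) powr p
               + (\<xi> + \<eta> * t) powr (p - 2) * (2 * (\<xi> - (2 * \<eta> * \<xi> - \<eta>) * t) / lam^2)))"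
proof -
  let ?Qc = "third_side_sq \<xi> (\<eta> * t) (1/lam) (1/lam)"
  have lam2: "2 \<le> lam^2"
    using assms by (intro two_le_sq_if_one_le_sq_mult_powr) auto
  have "\<bar>1/lam\<bar> \<le> 1"
    using assms by simp
  then have "?Qc = \<xi>^2 + \<eta>^2 * t^2 - 4 * \<eta> * \<xi> * t / lam^2 + 2 * \<eta> * \<xi> * t"
    by (simp add: third_side_sq_def cos_add_of_sin_self power_one_over algebra_simps)
  moreover have "0 \<le> ?Qc"
    using assms \<open>\<bar>1/lam\<bar> \<le> 1\<close> by (intro third_side_sq_bounds) auto
  moreover have "(SUP z \<in> {0..1/lam} \<times> {0..1/lam}. Ffun \<xi> \<eta> p lam t (fst z) (snd z))
      \<le> (\<xi> + \<eta> * t) powr p + sqrt ?Qc powr p"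
    using assms lam2 by (intro cSUP_least) (auto intro!: Ffun_le_corner)
  ultimately show ?thesis
    by (simp add: sqrt_powr_eq_powr_half)
qed

end
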